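(* (a) Let $\alpha\in(1/2,1)$ and $C>1$. Among probability distributions $p$ on $\{1,2,\dots\}$ with $\sum_k p_k k^\alpha \le C$, a maximizer of $H_\alpha(p)$ satisfies $p_k^{\alpha-1} = (\lambda k^\alpha+\mu)/\alpha$ for constants $\lambda>0,\mu$; it has infinite support and polynomial tail $p_k \asymp k^{-\alpha/(1-\alpha)}$ as $k\to\infty$ (normalizability of this form requiring $\alpha/(1-\alpha)>1$, i.e. $\alpha>1/2$). (b) Let $\alpha>1$ and $C>0$. Among probability distributions $p$ on $\{1,2,\dots\}$ with $\sum_k p_k \log k\le C$, a maximizer of $H_\alpha(p)$ satisfies $p_k^{\alpha-1} = [-(\lambda\log k+\mu)/\alpha]^+$ for constants $\lambda,\mu$ with $\lambda>0$, and hence has finite support $\{1,\dots,K_{\max}\}$.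
   Context: All logarithms are base 2; $[u]^+=\max\{u,0\}$. Rényi entropy of a distribution $p$ on a countable set: $H_\alpha(p) := \frac{1}{1-\alpha}\log\sum_k p_k^\alpha$ for $\alpha\in(0,1)\cup(1,\infty)$. *)

theory Defs
  imports "HOL-Analysis.Analysis" "HOL-Library.Landau_Symbols"
begin

text \<open>A probability distribution on the positive integers {1,2,...}, represented as a
  function on nat vanishing at 0.\<close>
definition pos_int_dist :: "(nat \<Rightarrow> real) \<Rightarrow> bool" where
  "pos_int_dist p \<longleftrightarrow> p 0 = 0 \<and> (\<forall>k. p k \<ge> 0) \<and> p sums 1"

text \<open>Renyi entropy (base 2), extended-real valued: the series of p_k^alpha has nonnegative
  terms, so if it diverges (possible only for alpha < 1) the entropy is +infinity.\<close>
definition renyi_entropy :: "real \<Rightarrow> (nat \<Rightarrow> real) \<Rightarrow> ereal" where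
  "renyi_entropy \<alpha> p =
     (if summable (\<lambda>k. p k powr \<alpha>)
      then ereal (1 / (1 - \<alpha>) * log 2 (\<Sum>k. p k powr \<alpha>))
      else PInfty)"

text \<open>Moment constraint sum_k p_k f(k) <= C (a divergent nonnegative series is +infinity,
  hence violates the constraint).\<close>
definition moment_le :: "(nat \<Rightarrow> real) \<Rightarrow> (nat \<Rightarrow> real) \<Rightarrow> real \<Rightarrow> bool" where
  "moment_le f p C \<longleftrightarrow> summable (\<lambda>k. p k * f k) \<and> (\<Sum>k. p k * f k) \<le> C"

definition renyi_maximizer :: "real \<Rightarrow> (nat \<Rightarrow> real) \<Rightarrow> real \<Rightarrow> (nat \<Rightarrow> real) \<Rightarrow> bool" where
  "renyi_maximizer \<alpha> f C p \<longleftrightarrow>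
     pos_int_dist p \<and> moment_le f p C \<and> renyi_entropy \<alpha> p \<noteq> PInfty \<and>
     (\<forall>q. pos_int_dist q \<and> moment_le f q C \<longrightarrow> renyi_entropy \<alpha> q \<le> renyi_entropy \<alpha> p)"

end

theory Submission
  imports Defs "HOL-Real_Asymp.Real_Asymp"
begin

text \<open>
  Write \<open>S(p) = \<Sum>\<^sub>k p\<^sub>k^\<alpha>\<close> and \<open>g\<close> for the moment function. As \<open>H\<^sub>\<alpha> = log S / (1 - \<alpha>)\<close>, a maximizer
  \<open>p\<close> maximizes \<open>S\<close> for \<open>\<alpha> < 1\<close> and minimizes it for \<open>\<alpha> > 1\<close> among the distributions with
  \<open>\<Sum>\<^sub>k p\<^sub>k g(k) \<le> C\<close>. Shifting mass between points of the support so that \<open>\<Sum> p\<^sub>k\<close> and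
  \<open>\<Sum> p\<^sub>k g(k)\<close> stay fixed, first-order optimality makes \<open>p\<^sub>k^(\<alpha>-1) = a g(k) + b\<close> on the
  support. Moving mass \<open>t\<close> onto a point outside the support changes \<open>S\<close> by \<open>t^\<alpha> + O(t)\<close>: for
  \<open>\<alpha> < 1\<close> this is positive for small \<open>t\<close>, so the support is all of \<open>{1,2,...}\<close>; for \<open>\<alpha> > 1\<close>
  the \<open>O(t)\<close> term dominates and forces \<open>a g(k) + b \<le> 0\<close> off the support. Finally \<open>p\<^sub>k \<rightarrow> 0\<close>,
  so \<open>p\<^sub>k^(\<alpha>-1)\<close> tends to \<open>\<infinity>\<close> for \<open>\<alpha> < 1\<close> and to \<open>0\<close> for \<open>\<alpha> > 1\<close>; this forces \<open>a > 0\<close>,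
  whence \<open>p\<^sub>k = (a k^\<alpha> + b)^(1/(\<alpha>-1)) \<asymp> k^(-\<alpha>/(1-\<alpha>))\<close>, respectively \<open>a < 0\<close>, whence the
  support \<open>{k. a log k + b > 0}\<close> is a finite initial segment.
\<close>

lemma pos_int_dist_ex_pos:
  assumes "pos_int_dist p"
  obtains i where "0 < p i"
proof -
  have "\<exists>i. 0 < p i"
  proof (rule ccontr)
    assume "\<nexists>i. 0 < p i"
    with assms have "p = (\<lambda>_. 0)"
      unfolding pos_int_dist_def by (meson antisym ext not_le)
    with assms show False
      unfolding pos_int_dist_def by (metis sums_zero sums_unique2 zero_neq_one)
  qed
  with that show thesis by blast
qed

lemma renyi_maximizerD:
  assumes "renyi_maximizer \<alpha> g C p"
  shows "pos_int_dist p" "p 0 = 0" "\<And>k. 0 \<le> p k" "p sums 1"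
    and "(\<lambda>k. p k * g k) sums (\<Sum>k. p k * g k)" "(\<Sum>k. p k * g k) \<le> C"
    and "summable (\<lambda>k. p k powr \<alpha>)"
    and "\<And>q. pos_int_dist q \<Longrightarrow> moment_le g q C \<Longrightarrow> renyi_entropy \<alpha> q \<le> renyi_entropy \<alpha> p"
  using assms
  unfolding renyi_maximizer_def pos_int_dist_def moment_le_def renyi_entropy_def
  by (auto simp: summable_sums split: if_splits)

lemma pos_int_dist_suminf_powr_pos:
  assumes "pos_int_dist p" "summable (\<lambda>k. p k powr \<alpha>)"
  shows "0 < (\<Sum>k. p k powr \<alpha>)"
proof -
  obtain i where "0 < p i" using pos_int_dist_ex_pos[OF assms(1)] .
  then show ?thesis by (intro suminf_pos2[OF assms(2), of i]) auto
qed

lemma renyi_entropy_le_imp_suminf_powr_compare: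
  assumes "summable (\<lambda>k. p k powr \<alpha>)" "summable (\<lambda>k. q k powr \<alpha>)"
    and P: "0 < (\<Sum>k. p k powr \<alpha>)" and Q: "0 < (\<Sum>k. q k powr \<alpha>)"
    and "renyi_entropy \<alpha> q \<le> renyi_entropy \<alpha> p"
  shows "(1 - \<alpha>) * ((\<Sum>k. q k powr \<alpha>) - (\<Sum>k. p k powr \<alpha>)) \<le> 0"
proof -
  have le: "log 2 (\<Sum>k. q k powr \<alpha>) / (1 - \<alpha>) \<le> log 2 (\<Sum>k. p k powr \<alpha>) / (1 - \<alpha>)"
    using assms(1,2,5) by (simp add: renyi_entropy_def)
  consider "\<alpha> < 1" | "\<alpha> = 1" | "1 < \<alpha>" by linarith
  then show ?thesis
  proof cases
    case 1
    with le have "log 2 (\<Sum>k. q k powr \<alpha>) \<le> log 2 (\<Sum>k. p k powr \<alpha>)"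
      by (simp add: divide_le_cancel)
    with 1 P Q show ?thesis by (simp add: mult_nonneg_nonpos)
  next
    case 3
    with le have "log 2 (\<Sum>k. p k powr \<alpha>) \<le> log 2 (\<Sum>k. q k powr \<alpha>)"
      by (simp add: divide_le_cancel)
    with 3 P Q show ?thesis by (simp add: mult_nonpos_nonneg)
  qed simp
qed

lemma renyi_maximizer_perturb:
  assumes M: "renyi_maximizer \<alpha> g C p"
    and W: "finite W" "0 \<notin> W" "\<forall>k\<in>W. 0 \<le> p k + w k" "sum w W = 0"
    and mom: "(\<Sum>k. p k * g k) + (\<Sum>k\<in>W. w k * g k) \<le> C"
  shows "(1 - \<alpha>) * ((\<Sum>k\<in>W. (p k + w k) powr \<alpha>) - (\<Sum>k\<in>W. p k powr \<alpha>)) \<le> 0"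
proof -
  note p = renyi_maximizerD[OF M]
  define q where "q k = p k + (if k \<in> W then w k else 0)" for k
  have "q sums (1 + sum w W)"
    unfolding q_def by (intro sums_add p(4) sums_If_finite_set W(1))
  then have "pos_int_dist q"
    using W p(2,3) unfolding pos_int_dist_def by (auto simp: q_def)
  moreover have "(\<lambda>k. q k * g k) = (\<lambda>k. p k * g k + (if k \<in> W then w k * g k else 0))"
    by (auto simp: q_def algebra_simps)
  then have "(\<lambda>k. q k * g k) sums ((\<Sum>k. p k * g k) + (\<Sum>k\<in>W. w k * g k))"
    by (simp only: sums_add p(5) sums_If_finite_set[OF W(1)])
  then have "moment_le g q C"
    using mom unfolding moment_le_def by (simp add: sums_iff)
  ultimately have le: "renyi_entropy \<alpha> q \<le> renyi_entropy \<alpha> p"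
    by (rule p(8))
  define D where "D = (\<Sum>k\<in>W. (p k + w k) powr \<alpha> - p k powr \<alpha>)"
  have "(\<lambda>k. q k powr \<alpha>) = (\<lambda>k. p k powr \<alpha> + (if k \<in> W then (p k + w k) powr \<alpha> - p k powr \<alpha> else 0))"
    by (auto simp: q_def)
  then have qs: "(\<lambda>k. q k powr \<alpha>) sums ((\<Sum>k. p k powr \<alpha>) + D)"
    unfolding D_def by (simp only: sums_add summable_sums[OF p(7)] sums_If_finite_set[OF W(1)])
  have "(1 - \<alpha>) * (((\<Sum>k. p k powr \<alpha>) + D) - (\<Sum>k. p k powr \<alpha>)) \<le> 0"
    using renyi_entropy_le_imp_suminf_powr_compare[OF p(7) sums_summable[OF qs]
        pos_int_dist_suminf_powr_pos[OF p(1,7)] pos_int_dist_suminf_powr_pos[OF \<open>pos_int_dist q\<close> sums_summable[OF qs]] le]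
    by (simp add: sums_unique[OF qs, symmetric])
  then show ?thesis by (simp add: D_def sum_subtractf)
qed

lemma has_real_derivative_powr_sum_shift:
  fixes p v :: "nat \<Rightarrow> real"
  assumes "finite W" "\<forall>k\<in>W. 0 < p k"
  shows "((\<lambda>t. \<Sum>k\<in>W. (p k + t * v k) powr \<alpha>) has_real_derivative
           \<alpha> * (\<Sum>k\<in>W. v k * p k powr (\<alpha> - 1))) (at 0)"
proof -
  have "((\<lambda>t. (p k + t * v k) powr \<alpha>) has_real_derivative \<alpha> * (v k * p k powr (\<alpha> - 1))) (at 0)"
    if "k \<in> W" for k
    using DERIV_fun_powr[of "\<lambda>t. p k + t * v k" "v k" 0 \<alpha>] assms that
    by (auto simp: mult_ac intro!: derivative_eq_intros)
  then show ?thesis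
    unfolding sum_distrib_left using assms(1) by (intro DERIV_sum)
qed

lemma eventually_nhds_shift_pos:
  fixes p v :: "nat \<Rightarrow> real"
  assumes "finite W" "\<forall>k\<in>W. 0 < p k"
  shows "\<forall>\<^sub>F t in nhds 0. \<forall>k\<in>W. 0 < p k + t * v k"
proof (intro eventually_ball_finite assms(1) ballI)
  fix k assume "k \<in> W"
  have "((\<lambda>t. p k + t * v k) \<longlongrightarrow> p k + 0 * v k) (nhds 0)"
    by (intro tendsto_intros filterlim_ident)
  with assms(2) \<open>k \<in> W\<close> show "\<forall>\<^sub>F t in nhds 0. 0 < p k + t * v k"
    by (auto dest: order_tendstoD(1))
qed

lemma renyi_maximizer_stationary:
  assumes M: "renyi_maximizer \<alpha> g C p" and \<alpha>: "0 < \<alpha>" "\<alpha> \<noteq> 1"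
    and W: "finite W" "\<forall>k\<in>W. 0 < p k" "sum v W = 0" "(\<Sum>k\<in>W. v k * g k) = 0"
  shows "(\<Sum>k\<in>W. v k * p k powr (\<alpha> - 1)) = 0"
proof -
  note p = renyi_maximizerD[OF M]
  define f where "f t = (1 - \<alpha>) * (\<Sum>k\<in>W. (p k + t * v k) powr \<alpha>)" for t
  have f': "(f has_real_derivative (1 - \<alpha>) * (\<alpha> * (\<Sum>k\<in>W. v k * p k powr (\<alpha> - 1)))) (at 0)"
    unfolding f_def using W by (intro DERIV_cmult has_real_derivative_powr_sum_shift)
  obtain d where "0 < d" and d: "\<And>t. \<bar>t\<bar> < d \<Longrightarrow> \<forall>k\<in>W. 0 < p k + t * v k"
    using eventually_nhds_shift_pos[OF W(1,2), of v]
    unfolding eventually_nhds_metric dist_real_def by auto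
  have "f t \<le> f 0" if "\<bar>t\<bar> < d" for t
  proof -
    have "0 \<notin> W" using W(2) p(2) by force
    moreover have "\<forall>k\<in>W. 0 \<le> p k + t * v k" using d[OF that] by (auto intro: less_imp_le)
    moreover have "sum (\<lambda>k. t * v k) W = 0" "(\<Sum>k\<in>W. t * v k * g k) = 0"
      using W(3,4) by (simp_all add: sum_distrib_left[symmetric] mult.assoc)
    ultimately show ?thesis
      using renyi_maximizer_perturb[OF M W(1), of "\<lambda>k. t * v k"] p(6)
      by (simp add: f_def algebra_simps)
  qed
  then have "(1 - \<alpha>) * (\<alpha> * (\<Sum>k\<in>W. v k * p k powr (\<alpha> - 1))) = 0"
    using DERIV_local_max[OF f' \<open>0 < d\<close>] by simp
  with \<alpha> show ?thesis by simp
qed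

lemma renyi_maximizer_transfer_compare:
  assumes M: "renyi_maximizer \<alpha> g C p"
    and W: "finite W" "\<forall>k\<in>W. 0 < p k" "1 + sum v W = 0"
    and j: "j \<noteq> 0" "p j = 0"
    and t: "0 < t" "\<forall>k\<in>W. 0 < p k + t * v k"
    and mom: "(\<Sum>k. p k * g k) + t * (g j + (\<Sum>k\<in>W. v k * g k)) \<le> C"
  shows "(1 - \<alpha>) * (t powr \<alpha> + ((\<Sum>k\<in>W. (p k + t * v k) powr \<alpha>) - (\<Sum>k\<in>W. p k powr \<alpha>))) \<le> 0"
proof -
  define w where "w k = t * (if k = j then 1 else v k)" for k
  have jW: "j \<notin> W" using W(2) j(2) by force
  have wj: "w j = t" and wW: "\<And>k. k \<in> W \<Longrightarrow> w k = t * v k"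
    using jW by (auto simp: w_def)
  have "sum w (insert j W) = t * (1 + sum v W)"
    using W(1) jW by (simp add: wj wW sum_distrib_left distrib_left)
  moreover have "(\<Sum>k\<in>insert j W. w k * g k) = t * (g j + (\<Sum>k\<in>W. v k * g k))"
    using W(1) jW by (simp add: wj wW sum_distrib_left distrib_left mult.assoc)
  moreover have "\<forall>k\<in>insert j W. 0 \<le> p k + w k"
    using t j by (auto simp: w_def intro: less_imp_le)
  moreover have "0 \<notin> insert j W" using W(2) j renyi_maximizerD(2)[OF M] by force
  ultimately have "(1 - \<alpha>) * ((\<Sum>k\<in>insert j W. (p k + w k) powr \<alpha>) - (\<Sum>k\<in>insert j W. p k powr \<alpha>)) \<le> 0"
    using renyi_maximizer_perturb[OF M, of "insert j W" w] W(1,3) mom by simp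
  then show ?thesis
    using W(1) jW j by (simp add: wj wW sum_subtractf algebra_simps)
qed

lemma renyi_maximizer_transfer_to_empty:
  assumes M: "renyi_maximizer \<alpha> g C p" and \<alpha>: "\<alpha> \<noteq> 1"
    and W: "finite W" "\<forall>k\<in>W. 0 < p k" "1 + sum v W = 0"
    and j: "j \<noteq> 0" "p j = 0"
    and mom: "\<forall>\<^sub>F t in at_right 0. (\<Sum>k. p k * g k) + t * (g j + (\<Sum>k\<in>W. v k * g k)) \<le> C"
  shows "1 < \<alpha> \<and> 0 \<le> (\<Sum>k\<in>W. v k * p k powr (\<alpha> - 1))"
proof -
  define h where "h t = (\<Sum>k\<in>W. (p k + t * v k) powr \<alpha>)" for t
  define D where "D = \<alpha> * (\<Sum>k\<in>W. v k * p k powr (\<alpha> - 1))"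
  define Q where "Q t = t powr (\<alpha> - 1) + (h t - h 0) / t" for t
  have "(h has_real_derivative D) (at_right 0)"
    unfolding h_def D_def
    by (rule has_field_derivative_at_within, rule has_real_derivative_powr_sum_shift) (use W in auto)
  then have h': "((\<lambda>t. (h t - h 0) / t) \<longlongrightarrow> D) (at_right 0)"
    by (simp add: has_field_derivative_iff)
  have "\<forall>\<^sub>F t in at_right (0::real). 0 < t"
    by (rule eventually_at_right_less)
  moreover have "\<forall>\<^sub>F t in at_right 0. \<forall>k\<in>W. 0 < p k + t * v k"
    using eventually_nhds_shift_pos[OF W(1,2)] by (rule filter_leD[OF at_within_le_nhds])
  ultimately have ev: "\<forall>\<^sub>F t in at_right 0. (1 - \<alpha>) * Q t \<le> 0"
    using mom
  proof eventually_elim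
    case (elim t)
    have "t * Q t = t powr \<alpha> + (h t - h 0)"
      using \<open>0 < t\<close> powr_mult_base[of t "\<alpha> - 1"] by (simp add: Q_def distrib_left)
    then have "(1 - \<alpha>) * (t * Q t) \<le> 0"
      using renyi_maximizer_transfer_compare[OF M W j, of t] elim by (simp add: h_def)
    with \<open>0 < t\<close> show ?case by (simp add: mult.left_commute mult_le_0_iff)
  qed
  show ?thesis
  proof (cases "\<alpha> < 1")
    case True
    have "filterlim (\<lambda>t. t powr (\<alpha> - 1)) at_top (at_right 0)"
      using True by real_asymp
    then have "filterlim Q at_top (at_right 0)"
      unfolding Q_def using filterlim_tendsto_add_at_top[OF h'] by (simp add: add.commute)
    then have "\<forall>\<^sub>F t in at_right 0. 0 < Q t"
      by (simp add: filterlim_at_top_dense)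
    with ev have "\<forall>\<^sub>F t in at_right (0::real). False"
      by eventually_elim (use True in \<open>simp add: mult_le_0_iff\<close>)
    then show ?thesis by simp
  next
    case False
    with \<alpha> have "1 < \<alpha>" by simp
    have "((\<lambda>t. t powr (\<alpha> - 1)) \<longlongrightarrow> 0) (at_right 0)"
      using \<open>1 < \<alpha>\<close> by real_asymp
    then have "(Q \<longlongrightarrow> 0 + D) (at_right 0)"
      unfolding Q_def by (intro tendsto_add h')
    moreover have "\<forall>\<^sub>F t in at_right 0. 0 \<le> Q t"
      using ev by eventually_elim (use \<open>1 < \<alpha>\<close> in \<open>simp add: mult_le_0_iff\<close>)
    ultimately have "0 \<le> D"
      by (intro tendsto_lowerbound) auto
    with \<open>1 < \<alpha>\<close> show ?thesis by (simp add: D_def zero_le_mult_iff)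
  qed
qed

lemma renyi_maximizer_no_transfer:
  assumes M: "renyi_maximizer \<alpha> g C p" and \<alpha>: "\<alpha> \<noteq> 1"
    and i: "0 < p i" and j: "j \<noteq> 0" "p j = 0"
    and mom: "\<forall>\<^sub>F t in at_right 0. (\<Sum>k. p k * g k) + t * (g j - g i) \<le> C"
  shows False
  using renyi_maximizer_transfer_to_empty[OF M \<alpha>, of "{i}" "\<lambda>_. -1" j] i j mom
  by simp

lemma renyi_maximizer_balanced_transfer:
  assumes M: "renyi_maximizer \<alpha> g C p" and \<alpha>: "\<alpha> \<noteq> 1"
    and i: "0 < p i" "0 < p i'" "g i \<noteq> g i'" and j: "j \<noteq> 0" "p j = 0"
  shows "1 < \<alpha> \<and>
    p i powr (\<alpha> - 1) \<le> (g i - g j) / (g i' - g i) * (p i' powr (\<alpha> - 1) - p i powr (\<alpha> - 1))"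
proof -
  \<comment> \<open>unit mass moves to \<open>j\<close>, taken from \<open>i\<close> and \<open>i'\<close> in the proportions that keep the moment fixed\<close>
  define s where "s = (g i - g j) / (g i' - g i)"
  define v where "v k = (if k = i' then s else -1 - s)" for k
  have ii': "i \<noteq> i'" using i(3) by auto
  have "s * (g i' - g i) = g i - g j" using i(3) by (simp add: s_def)
  then have "g j + (\<Sum>k\<in>{i, i'}. v k * g k) = 0"
    using ii' by (simp add: v_def algebra_simps)
  then have "1 < \<alpha> \<and> 0 \<le> (\<Sum>k\<in>{i, i'}. v k * p k powr (\<alpha> - 1))"
    using renyi_maximizerD(6)[OF M] ii' i j
    by (intro renyi_maximizer_transfer_to_empty[OF M \<alpha>]) (auto simp: v_def)
  then show ?thesis using ii' by (simp add: v_def s_def algebra_simps)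
qed

lemma renyi_maximizer_three_point:
  assumes M: "renyi_maximizer \<alpha> g C p" and \<alpha>: "0 < \<alpha>" "\<alpha> \<noteq> 1"
    and pos: "0 < p i" "0 < p j" "0 < p k"
  shows "(g j - g i) * p k powr (\<alpha> - 1) =
    (g j - g k) * p i powr (\<alpha> - 1) + (g k - g i) * p j powr (\<alpha> - 1)"
proof (cases "distinct [i, j, k]")
  case True
  define v where "v l = (if l = i then g j - g k else if l = j then g k - g i else g i - g j)" for l
  have "(\<Sum>l\<in>{i, j, k}. v l * p l powr (\<alpha> - 1)) = 0"
    using True pos
    by (intro renyi_maximizer_stationary[OF M \<alpha>]) (auto simp: v_def algebra_simps)
  with True show ?thesis by (simp add: v_def algebra_simps)
next
  case False
  then show ?thesis by (auto simp: algebra_simps)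
qed

lemma renyi_maximizer_powr_affine:
  assumes M: "renyi_maximizer \<alpha> g C p" and \<alpha>: "0 < \<alpha>" "\<alpha> \<noteq> 1"
    and i: "0 < p i" "0 < p j" "g i \<noteq> g j"
  obtains a b where "\<And>k. 0 < p k \<Longrightarrow> p k powr (\<alpha> - 1) = a * g k + b"
proof
  fix k assume "0 < p k"
  define a where "a = (p j powr (\<alpha> - 1) - p i powr (\<alpha> - 1)) / (g j - g i)"
  have "(g j - g i) * a = p j powr (\<alpha> - 1) - p i powr (\<alpha> - 1)"
    using i(3) by (simp add: a_def)
  then have "(g j - g i) * p k powr (\<alpha> - 1) = (g j - g i) * (a * g k + (p i powr (\<alpha> - 1) - a * g i))"
    unfolding renyi_maximizer_three_point[OF M \<alpha> i(1,2) \<open>0 < p k\<close>] by algebra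
  with i(3) show "p k powr (\<alpha> - 1) = a * g k + (p i powr (\<alpha> - 1) - a * g i)"
    by simp
qed

lemma renyi_maximizer_powr_eq_max_affine:
  assumes M: "renyi_maximizer \<alpha> g C p" and \<alpha>: "1 < \<alpha>"
    and i: "0 < p i" "0 < p i'" "g i \<noteq> g i'"
    and aff: "\<And>k. 0 < p k \<Longrightarrow> p k powr (\<alpha> - 1) = a * g k + b"
    and k: "k \<noteq> 0"
  shows "p k powr (\<alpha> - 1) = max (a * g k + b) 0"
proof (cases "0 < p k")
  case True
  then have "0 < p k powr (\<alpha> - 1)" by simp
  with aff[OF True] show ?thesis by simp
next
  case False
  \<comment> \<open>so the left-hand side is \<open>0 powr (\<alpha> - 1) = 0\<close>\<close>
  then have pk: "p k = 0" using renyi_maximizerD(3)[OF M, of k] by simp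
  have "p i powr (\<alpha> - 1) \<le> (g i - g k) / (g i' - g i) * (p i' powr (\<alpha> - 1) - p i powr (\<alpha> - 1))"
    using renyi_maximizer_balanced_transfer[OF M _ i k pk] \<alpha> by simp
  also have "\<dots> = (g i - g k) * a"
    using i(3) by (simp add: aff[OF i(1)] aff[OF i(2)] field_simps)
  finally have "a * g k + b \<le> 0" by (simp add: aff[OF i(1)] algebra_simps)
  with pk show ?thesis by simp
qed

lemma renyi_maximizer_point_mass_moment:
  assumes M: "renyi_maximizer \<alpha> g C p" and i: "\<And>k. k \<noteq> i \<Longrightarrow> p k = 0"
  shows "(\<Sum>k. p k * g k) = g i"
proof -
  have "(\<lambda>k. if k = i then p i else 0) = p"
    using i by auto
  then have "p sums p i"
    using sums_single[of i "\<lambda>_. p i"] by simp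
  then have "p i = 1"
    using renyi_maximizerD(4)[OF M] sums_unique2 by blast
  have "(\<lambda>k. if k = i then p i * g i else 0) = (\<lambda>k. p k * g k)"
    using i by auto
  then have "(\<lambda>k. p k * g k) sums (p i * g i)"
    using sums_single[of i "\<lambda>_. p i * g i"] by simp
  with \<open>p i = 1\<close> show ?thesis
    using sums_unique by fastforce
qed

lemma eventually_at_right_le_of_less:
  fixes m C x :: real
  assumes "m < C"
  shows "\<forall>\<^sub>F t in at_right 0. m + t * x \<le> C"
proof -
  have "((\<lambda>t. m + t * x) \<longlongrightarrow> m + 0 * x) (at_right 0)"
    by (intro tendsto_intros)
  then have "\<forall>\<^sub>F t in at_right 0. m + t * x < C"
    using assms by (intro order_tendstoD(2)) auto
  then show ?thesis
    by (rule eventually_mono) simp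
qed

lemma eventually_at_right_le_of_nonpos:
  fixes m C x :: real
  assumes "m \<le> C" "x \<le> 0"
  shows "\<forall>\<^sub>F t in at_right 0. m + t * x \<le> C"
  using eventually_at_right_less[of 0]
proof eventually_elim
  case (elim t)
  with assms(2) have "t * x \<le> 0" by (simp add: mult_nonneg_nonpos)
  with assms(1) show ?case by linarith
qed

lemma renyi_maximizer_full_support:
  assumes M: "renyi_maximizer \<alpha> g C p" and "\<alpha> < 1"
    and g: "\<And>k. 2 \<le> k \<Longrightarrow> g 1 < g k" and "g 1 < C" and k: "1 \<le> k"
  shows "0 < p k"
proof -
  note p = renyi_maximizerD[OF M]
  have \<alpha>: "\<alpha> \<noteq> 1" using \<open>\<alpha> < 1\<close> by simp
  have zero_of_not_pos: "p l = 0" if "\<not> 0 < p l" for l using p(3)[of l] that by simp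
  have p1: "0 < p 1"
  proof (rule ccontr)
    assume "\<not> 0 < p 1"
    obtain m where m: "0 < p m" using pos_int_dist_ex_pos[OF p(1)] .
    have "m \<noteq> 0" "m \<noteq> 1" using m p(2) \<open>\<not> 0 < p 1\<close> by (metis less_irrefl)+
    then have "g 1 - g m \<le> 0" using g[of m] by simp
    then show False
      using renyi_maximizer_no_transfer[OF M \<alpha> m, of 1] zero_of_not_pos \<open>\<not> 0 < p 1\<close>
        eventually_at_right_le_of_nonpos[OF p(6)] by simp
  qed
  show ?thesis
  proof (rule ccontr)
    assume "\<not> 0 < p k"
    then have pk: "p k = 0" by (rule zero_of_not_pos)
    with p1 k have k2: "2 \<le> k" by (cases "k = 1") auto
    show False
    proof (cases "\<exists>m\<ge>2. 0 < p m")
      case True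
      then obtain m where "2 \<le> m" "0 < p m" by blast
      with g[of m] have "g 1 \<noteq> g m" by simp
      from renyi_maximizer_balanced_transfer[OF M \<alpha> p1 \<open>0 < p m\<close> this _ pk] k2 \<open>\<alpha> < 1\<close>
      show False by simp
    next
      case False
      then have "p l = 0" if "l \<noteq> 1" for l
        using that p(2) zero_of_not_pos by (cases "l = 0") auto
      then have "(\<Sum>k. p k * g k) = g 1"
        by (rule renyi_maximizer_point_mass_moment[OF M])
      with \<open>g 1 < C\<close> show False
        using renyi_maximizer_no_transfer[OF M \<alpha> p1 _ pk] k2 eventually_at_right_le_of_less by simp
    qed
  qed
qed

lemma filterlim_powr_at_top_of_tendsto_zero:
  fixes f :: "'a \<Rightarrow> real"
  assumes "(f \<longlongrightarrow> 0) F" "\<forall>\<^sub>F x in F. 0 < f x" "\<alpha> < 1"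
  shows "filterlim (\<lambda>x. f x powr (\<alpha> - 1)) at_top F"
proof -
  have "filterlim (\<lambda>x. x powr (\<alpha> - 1)) at_top (at_right (0::real))"
    using assms(3) by real_asymp
  moreover have "filterlim f (at_right 0) F"
    using assms(1,2) by (rule tendsto_imp_filterlim_at_right)
  ultimately show ?thesis
    by (rule filterlim_compose)
qed

lemma bigtheta_of_powr_eq_affine_powr:
  fixes p :: "nat \<Rightarrow> real"
  assumes \<alpha>: "0 < \<alpha>" "\<alpha> < 1" and "0 < a"
    and pos: "\<And>k. 1 \<le> k \<Longrightarrow> 0 < p k"
    and aff: "\<And>k. 1 \<le> k \<Longrightarrow> p k powr (\<alpha> - 1) = a * real k powr \<alpha> + b"
  shows "p \<in> \<Theta>(\<lambda>k. real k powr (- \<alpha> / (1 - \<alpha>)))"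
proof -
  define e where "e = 1 / (\<alpha> - 1)"
  have ratio: "p k / real k powr (- \<alpha> / (1 - \<alpha>)) = (a + b * real k powr (- \<alpha>)) powr e"
    if k: "1 \<le> k" for k
  proof -
    have "real k powr \<alpha> \<noteq> 0" using k by simp
    then have factor: "p k powr (\<alpha> - 1) = real k powr \<alpha> * (a + b * real k powr (- \<alpha>))"
      using aff[OF k] by (simp add: powr_minus field_simps)
    have "p k = (p k powr (\<alpha> - 1)) powr e"
      using pos[OF k] \<alpha> by (simp add: e_def powr_powr)
    also have "\<dots> = (real k powr \<alpha> * (a + b * real k powr (- \<alpha>))) powr e"
      by (simp only: factor)
    also have "\<dots> = real k powr (\<alpha> * e) * (a + b * real k powr (- \<alpha>)) powr e"
    proof -
      have "0 < real k powr \<alpha> * (a + b * real k powr (- \<alpha>))"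
        using pos[OF k] by (simp flip: factor)
      then have "0 < a + b * real k powr (- \<alpha>)"
        using k by (simp add: zero_less_mult_iff)
      then show ?thesis by (simp add: powr_mult powr_powr)
    qed
    also have "\<alpha> * e = - \<alpha> / (1 - \<alpha>)"
      using \<alpha> by (simp add: e_def field_simps)
    finally show ?thesis using k by simp
  qed
  have "((\<lambda>k. (a + b * real k powr (- \<alpha>)) powr e) \<longlongrightarrow> a powr e) at_top"
    using \<open>0 < a\<close> \<alpha> unfolding e_def by real_asymp
  then have "((\<lambda>k. p k / real k powr (- \<alpha> / (1 - \<alpha>))) \<longlongrightarrow> a powr e) at_top"
    by (rule Lim_transform_eventually)
      (use eventually_ge_at_top[of 1] in \<open>eventually_elim, use ratio in simp\<close>)
  then show ?thesis
    by (rule bigthetaI_tendsto[rotated]) (use \<open>0 < a\<close> in simp)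
qed

lemma powr_affine_slope_pos:
  fixes p g :: "nat \<Rightarrow> real"
  assumes "\<alpha> < 1" "p \<longlonglongrightarrow> 0" and pos: "\<And>k. 1 \<le> k \<Longrightarrow> 0 < p k"
    and aff: "\<And>k. 1 \<le> k \<Longrightarrow> p k powr (\<alpha> - 1) = a * g k + b"
    and g: "\<And>k. 1 \<le> k \<Longrightarrow> g 1 \<le> g k"
  shows "0 < a"
proof (rule ccontr)
  assume "\<not> 0 < a"
  then have bounded: "p k powr (\<alpha> - 1) \<le> a * g 1 + b" if "1 \<le> k" for k
    using aff[OF that] mult_left_mono_neg[OF g[OF that], of a] by simp
  have "\<forall>\<^sub>F k in sequentially. 0 < p k"
    using eventually_ge_at_top[of 1] by eventually_elim (rule pos)
  with assms(1,2) have "filterlim (\<lambda>k. p k powr (\<alpha> - 1)) at_top sequentially"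
    by (intro filterlim_powr_at_top_of_tendsto_zero)
  then have "\<forall>\<^sub>F k in sequentially. a * g 1 + b < p k powr (\<alpha> - 1)"
    by (simp add: filterlim_at_top_dense)
  then have "\<forall>\<^sub>F k in sequentially. False"
    using eventually_ge_at_top[of 1] by eventually_elim (use bounded in fastforce)
  then show False by simp
qed

lemma renyi_maximizer_power_moment:
  fixes \<alpha> C :: real and p :: "nat \<Rightarrow> real"
  assumes \<alpha>: "0 < \<alpha>" "\<alpha> < 1" and "1 < C"
    and M: "renyi_maximizer \<alpha> (\<lambda>k. real k powr \<alpha>) C p"
  shows "(\<exists>lam mu. 0 < lam \<and>
            (\<forall>k\<ge>1. 0 < p k \<and> p k powr (\<alpha> - 1) = (lam * real k powr \<alpha> + mu) / \<alpha>)) \<and>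
         infinite {k. 0 < p k} \<and>
         p \<in> \<Theta>(\<lambda>k. real k powr (- \<alpha> / (1 - \<alpha>)))"
proof -
  define g where "g k = real k powr \<alpha>" for k :: nat
  note M = M[folded g_def]
  have g_mono: "g 1 \<le> g k" if "1 \<le> k" for k
    using that \<alpha> by (simp add: g_def ge_one_powr_ge_zero)
  have pos: "0 < p k" if "1 \<le> k" for k
    using renyi_maximizer_full_support[OF M \<alpha>(2) _ _ that] \<alpha> \<open>1 < C\<close> by (simp add: g_def)
  have \<alpha>': "0 < \<alpha>" "\<alpha> \<noteq> 1" using \<alpha> by simp_all
  have p12: "0 < p 1" "0 < p 2" using pos by simp_all
  have "g 1 \<noteq> g 2" using \<alpha> by (simp add: g_def)
  then obtain a b where aff: "\<And>k. 0 < p k \<Longrightarrow> p k powr (\<alpha> - 1) = a * g k + b"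
    using renyi_maximizer_powr_affine[OF M \<alpha>' p12] by blast
  have "p \<longlonglongrightarrow> 0"
    using renyi_maximizerD(4)[OF M] by (simp add: sums_iff summable_LIMSEQ_zero)
  moreover have "p k powr (\<alpha> - 1) = a * g k + b" if "1 \<le> k" for k
    using aff pos that by blast
  ultimately have "0 < a"
    using powr_affine_slope_pos[OF \<alpha>(2)] pos g_mono by blast
  have "{k. 0 < p k} = {1..}"
    using pos renyi_maximizerD(2)[OF M] by (auto simp: Suc_le_eq intro!: gr0I)
  moreover have "p \<in> \<Theta>(\<lambda>k. real k powr (- \<alpha> / (1 - \<alpha>)))"
    using bigtheta_of_powr_eq_affine_powr[OF \<alpha> \<open>0 < a\<close> pos] aff pos by (simp add: g_def)
  moreover have "\<forall>k\<ge>1. 0 < p k \<and> p k powr (\<alpha> - 1) = ((\<alpha> * a) * real k powr \<alpha> + \<alpha> * b) / \<alpha>"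
    using pos aff \<alpha> by (simp add: g_def field_simps)
  ultimately show ?thesis
    using \<open>0 < a\<close> \<alpha> infinite_Ici by (metis mult_pos_pos)
qed

lemma renyi_maximizer_support_not_singleton:
  assumes M: "renyi_maximizer \<alpha> g C p" and \<alpha>: "\<alpha> \<noteq> 1"
    and g: "\<And>k. 1 \<le> k \<Longrightarrow> g 1 \<le> g k" and "g 1 < C" and i: "0 < p i"
  obtains j where "0 < p j" "j \<noteq> i"
proof -
  note p = renyi_maximizerD[OF M]
  have "\<exists>j. 0 < p j \<and> j \<noteq> i"
  proof (rule ccontr)
    assume "\<nexists>j. 0 < p j \<and> j \<noteq> i"
    then have zero: "p k = 0" if "k \<noteq> i" for k
      using that p(3)[of k] by force
    have "i \<noteq> 0" using i p(2) by (metis less_irrefl)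
    show False
    proof (cases "i = 1")
      case True
      have "(\<Sum>k. p k * g k) = g 1"
        using renyi_maximizer_point_mass_moment[OF M zero] True by simp
      with \<open>g 1 < C\<close> show False
        using renyi_maximizer_no_transfer[OF M \<alpha> i, of 2] zero True eventually_at_right_le_of_less
        by simp
    next
      case False
      with \<open>i \<noteq> 0\<close> have "g 1 - g i \<le> 0" using g[of i] by simp
      then show False
        using renyi_maximizer_no_transfer[OF M \<alpha> i, of 1] zero False
          eventually_at_right_le_of_nonpos[OF p(6)] by simp
    qed
  qed
  with that show thesis by blast
qed

lemma renyi_maximizer_powr_max_affine:
  assumes M: "renyi_maximizer \<alpha> g C p" and \<alpha>: "1 < \<alpha>"
    and g: "\<And>k. 1 \<le> k \<Longrightarrow> g 1 \<le> g k" "g 1 < C" and inj: "inj_on g {1..}"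
  obtains a b where "\<And>k. k \<noteq> 0 \<Longrightarrow> p k powr (\<alpha> - 1) = max (a * g k + b) 0"
proof -
  note p = renyi_maximizerD[OF M]
  have \<alpha>': "0 < \<alpha>" "\<alpha> \<noteq> 1" using \<alpha> by auto
  have nz: "1 \<le> k" if "0 < p k" for k
    using that p(2) by (cases k) auto
  obtain i where i: "0 < p i" using pos_int_dist_ex_pos[OF p(1)] .
  obtain i' where i': "0 < p i'" "i' \<noteq> i"
    using renyi_maximizer_support_not_singleton[OF M \<alpha>'(2) g i] .
  have "g i \<noteq> g i'"
    using i' nz[OF i] nz[OF i'(1)] inj_onD[OF inj] by auto
  obtain a b where aff: "\<And>k. 0 < p k \<Longrightarrow> p k powr (\<alpha> - 1) = a * g k + b"
    using renyi_maximizer_powr_affine[OF M \<alpha>' i i'(1) \<open>g i \<noteq> g i'\<close>] by blast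
  show thesis
    by (rule that, rule renyi_maximizer_powr_eq_max_affine[OF M \<alpha> i i'(1) \<open>g i \<noteq> g i'\<close> aff])
qed

lemma powr_max_affine_slope_neg:
  fixes p g :: "nat \<Rightarrow> real"
  assumes "1 < \<alpha>" "p \<longlonglongrightarrow> 0" "\<And>k. 0 \<le> p k" and i: "0 < p i" "i \<noteq> 0"
    and kkt: "\<And>k. k \<noteq> 0 \<Longrightarrow> p k powr (\<alpha> - 1) = max (a * g k + b) 0"
    and g: "\<And>k. i \<le> k \<Longrightarrow> g i \<le> g k"
  shows "a < 0"
proof (rule ccontr)
  assume "\<not> a < 0"
  have grow: "p i powr (\<alpha> - 1) \<le> p k powr (\<alpha> - 1)" if "i \<le> k" for k
  proof -
    have "k \<noteq> 0" using that i(2) by simp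
    have "a * g i + b \<le> a * g k + b"
      using \<open>\<not> a < 0\<close> g[OF that] by (simp add: mult_left_mono)
    then show ?thesis
      unfolding kkt[OF i(2)] kkt[OF \<open>k \<noteq> 0\<close>] by (rule max.mono) simp
  qed
  have "0 < p i powr (\<alpha> - 1)" using i by simp
  have "(\<lambda>k. p k powr (\<alpha> - 1)) \<longlonglongrightarrow> 0"
    using assms(1-3) by (intro tendsto_zero_powrI) auto
  then have "\<forall>\<^sub>F k in sequentially. p k powr (\<alpha> - 1) < p i powr (\<alpha> - 1)"
    using \<open>0 < p i powr (\<alpha> - 1)\<close> by (rule order_tendstoD(2))
  then have "\<forall>\<^sub>F k in sequentially. False"
    using eventually_ge_at_top[of i] by eventually_elim (use grow in \<open>meson not_le\<close>)
  then show False by simp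
qed

lemma log_affine_pos_set_eq_atLeastAtMost:
  fixes a b :: real
  assumes "a < 0"
  obtains K where "{k::nat. k \<noteq> 0 \<and> 0 < a * log 2 (real k) + b} = {1..K}"
proof
  define r where "r = 2 powr (- b / a)"
  show "{k::nat. k \<noteq> 0 \<and> 0 < a * log 2 (real k) + b} = {1..nat (\<lceil>r\<rceil> - 1)}"
  proof (intro set_eqI)
    fix k :: nat
    have "k \<noteq> 0 \<and> 0 < a * log 2 (real k) + b \<longleftrightarrow> k \<noteq> 0 \<and> log 2 (real k) < - b / a"
      using \<open>a < 0\<close> by (auto simp: field_simps)
    also have "\<dots> \<longleftrightarrow> k \<noteq> 0 \<and> real k < r"
      by (auto simp: r_def log_less_iff)
    also have "\<dots> \<longleftrightarrow> k \<noteq> 0 \<and> int k < \<lceil>r\<rceil>"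
      by (simp add: less_ceiling_iff)
    also have "\<dots> \<longleftrightarrow> k \<in> {1..nat (\<lceil>r\<rceil> - 1)}"
      by auto
    finally show "k \<in> {k. k \<noteq> 0 \<and> 0 < a * log 2 (real k) + b} \<longleftrightarrow> k \<in> {1..nat (\<lceil>r\<rceil> - 1)}"
      by simp
  qed
qed

lemma renyi_maximizer_log_moment:
  fixes \<alpha> C :: real and p :: "nat \<Rightarrow> real"
  assumes \<alpha>: "1 < \<alpha>" and "0 < C"
    and M: "renyi_maximizer \<alpha> (\<lambda>k. log 2 (real k)) C p"
  shows "(\<exists>lam mu. 0 < lam \<and>
            (\<forall>k\<ge>1. p k powr (\<alpha> - 1) = max (- (lam * log 2 (real k) + mu) / \<alpha>) 0)) \<and>
         (\<exists>Kmax\<ge>1. {k. 0 < p k} = {1..Kmax})"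
proof -
  define g where "g k = log 2 (real k)" for k :: nat
  note M = M[folded g_def]
  note p = renyi_maximizerD[OF M]
  have "inj_on g {1..}"
  proof (rule inj_onI)
    fix x y :: nat assume "x \<in> {1..}" "y \<in> {1..}" "g x = g y"
    then have "real x = real y"
      using inj_onD[OF log_inj[of 2], of "real x" "real y"] by (simp add: g_def)
    then show "x = y" by simp
  qed
  moreover have "g 1 \<le> g k" if "1 \<le> k" for k using that by (simp add: g_def)
  moreover have "g 1 < C" using \<open>0 < C\<close> by (simp add: g_def)
  ultimately obtain a b where kkt: "\<And>k. k \<noteq> 0 \<Longrightarrow> p k powr (\<alpha> - 1) = max (a * g k + b) 0"
    using renyi_maximizer_powr_max_affine[OF M \<alpha>] by blast
  obtain i where i: "0 < p i" using pos_int_dist_ex_pos[OF p(1)] .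
  then have "i \<noteq> 0" using p(2) by (metis less_irrefl)
  have "p \<longlonglongrightarrow> 0"
    using p(4) by (simp add: sums_iff summable_LIMSEQ_zero)
  moreover have "g i \<le> g k" if "i \<le> k" for k
    using that \<open>i \<noteq> 0\<close> by (simp add: g_def)
  ultimately have "a < 0"
    using powr_max_affine_slope_neg[where p = p and g = g, OF \<alpha> _ p(3) i \<open>i \<noteq> 0\<close> kkt] by blast
  then obtain K where K: "{k. k \<noteq> 0 \<and> 0 < a * g k + b} = {1..K}"
    unfolding g_def by (rule log_affine_pos_set_eq_atLeastAtMost)
  have "0 < p k \<longleftrightarrow> k \<noteq> 0 \<and> 0 < a * g k + b" for k
  proof (cases "k = 0")
    case False
    have "0 < p k \<longleftrightarrow> 0 < p k powr (\<alpha> - 1)"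
      using p(3)[of k] by (auto simp: order_le_less)
    with kkt[OF False] False show ?thesis by (simp add: less_max_iff_disj)
  qed (simp add: p(2))
  with K have supp: "{k. 0 < p k} = {1..K}" by blast
  with i have "1 \<le> K" by (metis atLeastAtMost_iff mem_Collect_eq order_trans)
  have "- ((- \<alpha> * a) * x + (- \<alpha> * b)) / \<alpha> = a * x + b" for x
    using \<alpha> by (simp add: field_simps)
  then have "\<forall>k\<ge>1. p k powr (\<alpha> - 1) = max (- ((- \<alpha> * a) * log 2 (real k) + (- \<alpha> * b)) / \<alpha>) 0"
    using kkt by (simp add: g_def)
  moreover have "0 < - \<alpha> * a"
    using \<alpha> \<open>a < 0\<close> by (simp add: mult_less_0_iff)
  ultimately show ?thesis
    using supp \<open>1 \<le> K\<close> by blast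
qed

theorem mainTheorem6:
  shows
  "(\<forall>(\<alpha>::real) (C::real) (p::nat \<Rightarrow> real).
       1/2 < \<alpha> \<and> \<alpha> < 1 \<and> C > 1 \<and>
       renyi_maximizer \<alpha> (\<lambda>k. real k powr \<alpha>) C p \<longrightarrow>
       (\<exists>lam mu::real. lam > 0 \<and>
          (\<forall>k\<ge>1. p k > 0 \<and> p k powr (\<alpha> - 1) = (lam * real k powr \<alpha> + mu) / \<alpha>)) \<and>
       infinite {k. p k > 0} \<and>
       p \<in> \<Theta>(\<lambda>k. real k powr (- \<alpha> / (1 - \<alpha>))))
   \<and>
   (\<forall>(\<alpha>::real) (C::real) (p::nat \<Rightarrow> real).
       \<alpha> > 1 \<and> C > 0 \<and>
       renyi_maximizer \<alpha> (\<lambda>k. log 2 (real k)) C p \<longrightarrow>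
       (\<exists>lam mu::real. lam > 0 \<and>
          (\<forall>k\<ge>1. p k powr (\<alpha> - 1) = max (- (lam * log 2 (real k) + mu) / \<alpha>) 0)) \<and>
       (\<exists>Kmax\<ge>1. {k. p k > 0} = {1..Kmax}))"
  by (rule conjI; intro allI impI; elim conjE;
      rule renyi_maximizer_power_moment renyi_maximizer_log_moment; simp)

end
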